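(* Let $\mathcal{D}$ be the set of $d\times d$ density matrices. For $u\in\mathbb{R}$, $\mu\in\{1,\ldots,m\}$ let $M_\mu^u\in\mathbb{C}^{d\times d}$ with $\sum_\mu(M_\mu^u)^\dagger M_\mu^u=\mathrm{I}$, such that (A1) $M_\mu^0=\sum_nc_{\mu,n}|n\rangle\langle n|$ in a fixed orthonormal basis $\{|n\rangle\}$; (A2) for all $n_1\neq n_2$ there is $\mu$ with $|c_{\mu,n_1}|^2\neq|c_{\mu,n_2}|^2$; (A3) each $u\mapsto M_\mu^u$ is $C^2$. For $(\rho,\beta)\in\mathcal{D}\times\mathbb{R}$ let $p_\mu=\mathrm{tr}(M_\mu^\beta\rho(M_\mu^\beta)^\dagger)$, $a_{\mu,n}=\langle n|M_\mu^\beta\rho(M_\mu^\beta)^\dagger|n\rangle$, and $$Q_1(\rho,\beta)=\sum_{n}\sum_{\mu,\nu:\,p_\mu p_\nu>0}\frac{p_\mu p_\nu}{4}\Big(\frac{a_{\mu,n}}{p_\mu}-\frac{a_{\nu,n}}{p_\nu}\Big)^2.$$ Let $\tilde u>0$. Then there exists $C>0$ such that for all $(\rho,\beta)\in\mathcal{D}\times[-\tilde u,\tilde u]$ with $Q_1(\rho,\beta)=0$, there exists $n\in\{1,\ldots,d\}$ with $\langle n|\rho|n\rangle\ge1-C|\beta|$. *)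

theory Defs
  imports "HOL-Analysis.Analysis"
begin

text \<open>d x d complex matrices are modelled as complex^'d^'d with 'd a finite index type
  (d = CARD('d)); the Kraus index set {1..m} is a finite type 'm.\<close>

definition cadj :: "complex^'d^'d \<Rightarrow> complex^'d^'d" where
  "cadj A = (\<chi> i j. cnj (A $ j $ i))"

definition ctrace :: "complex^'d^'d \<Rightarrow> complex" where
  "ctrace A = (\<Sum>i\<in>UNIV. A $ i $ i)"

definition diag_mat :: "('d \<Rightarrow> complex) \<Rightarrow> complex^'d^'d" where
  "diag_mat c = (\<chi> i j. if i = j then c i else 0)"

definition unitary_mat :: "complex^'d^'d \<Rightarrow> bool" where
  "unitary_mat U \<longleftrightarrow> cadj U ** U = mat 1 \<and> U ** cadj U = mat 1"

definition psd_mat :: "complex^'d^'d \<Rightarrow> bool" where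
  "psd_mat A \<longleftrightarrow> (\<forall>x::complex^'d.
      let q = (\<Sum>i\<in>UNIV. \<Sum>j\<in>UNIV. cnj (x $ i) * A $ i $ j * x $ j)
      in q \<in> \<real> \<and> Re q \<ge> 0)"

definition density_mat :: "complex^'d^'d \<Rightarrow> bool" where
  "density_mat \<rho> \<longleftrightarrow> psd_mat \<rho> \<and> ctrace \<rho> = 1"

text \<open>Diagonal element <n|A|n> in the orthonormal basis given by the columns of the unitary U.\<close>
definition bdiag :: "complex^'d^'d \<Rightarrow> complex^'d^'d \<Rightarrow> 'd \<Rightarrow> complex" where
  "bdiag U A n = (cadj U ** A ** U) $ n $ n"

definition C2_fun :: "(real \<Rightarrow> 'a::real_normed_vector) \<Rightarrow> bool" where
  "C2_fun f \<longleftrightarrow> (\<exists>f' f''. (\<forall>u. (f has_vector_derivative f' u) (at u)) \<and>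
      (\<forall>u. (f' has_vector_derivative f'' u) (at u)) \<and> continuous_on UNIV f'')"

definition prob_out :: "('m \<Rightarrow> real \<Rightarrow> complex^'d^'d) \<Rightarrow> complex^'d^'d \<Rightarrow> real \<Rightarrow> 'm \<Rightarrow> real" where
  "prob_out M \<rho> \<beta> \<mu> = Re (ctrace (M \<mu> \<beta> ** \<rho> ** cadj (M \<mu> \<beta>)))"

definition a_coef :: "complex^'d^'d \<Rightarrow> ('m \<Rightarrow> real \<Rightarrow> complex^'d^'d) \<Rightarrow> complex^'d^'d \<Rightarrow> real \<Rightarrow> 'm \<Rightarrow> 'd \<Rightarrow> real" where
  "a_coef U M \<rho> \<beta> \<mu> n = Re (bdiag U (M \<mu> \<beta> ** \<rho> ** cadj (M \<mu> \<beta>)) n)"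

definition Q1 :: "complex^'d^'d \<Rightarrow> ('m \<Rightarrow> real \<Rightarrow> complex^'d^'d) \<Rightarrow> complex^'d^'d \<Rightarrow> real \<Rightarrow> real" where
  "Q1 U M \<rho> \<beta> = (\<Sum>n\<in>UNIV. \<Sum>(\<mu>,\<nu>)\<in>{(\<mu>,\<nu>). prob_out M \<rho> \<beta> \<mu> * prob_out M \<rho> \<beta> \<nu> > 0}.
      prob_out M \<rho> \<beta> \<mu> * prob_out M \<rho> \<beta> \<nu> / 4 *
      (a_coef U M \<rho> \<beta> \<mu> n / prob_out M \<rho> \<beta> \<mu> - a_coef U M \<rho> \<beta> \<nu> n / prob_out M \<rho> \<beta> \<nu>)^2)"

end

theory Submission
  imports Defs
begin

text \<open>
  Vanishing of \<open>Q\<^sub>1(\<rho>,\<beta>)\<close> says exactly that the rows \<open>a\<^sub>\<mu>\<^sub>,\<^sub>\<cdot>\<close> of the post-measurement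
  populations are proportional: \<open>a\<^sub>\<mu>\<^sub>,\<^sub>n p\<^sub>\<nu> = a\<^sub>\<nu>\<^sub>,\<^sub>n p\<^sub>\<mu>\<close>. At \<open>\<beta> = 0\<close> the Kraus operators are
  diagonal, so \<open>a\<^sub>\<mu>\<^sub>,\<^sub>n = |c\<^sub>\<mu>\<^sub>,\<^sub>n|\<^sup>2 \<rho>\<^sub>n\<^sub>n\<close>; since \<open>u \<mapsto> M\<^sub>\<mu>\<^sup>u\<close> is Lipschitz near \<open>0\<close> (only the
  \<open>C\<^sup>1\<close> part of (A3) is used), the proportionality survives at \<open>\<beta> = 0\<close> up to an error
  \<open>O(|\<beta>|)\<close>, uniformly in \<open>\<rho>\<close>. Averaging over \<open>\<nu>\<close> gives \<open>\<rho>\<^sub>n\<^sub>n (|c\<^sub>\<mu>\<^sub>,\<^sub>n|\<^sup>2 - p\<^sub>\<mu>) = O(|\<beta>|)\<close>, and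
  comparing two indices \<open>n \<noteq> n'\<close> separated by (A2) yields \<open>\<rho>\<^sub>n\<^sub>n \<rho>\<^sub>n\<^sub>'\<^sub>n\<^sub>' = O(|\<beta>|)\<close>. A
  probability vector whose distinct coordinates have small products has one coordinate
  close to \<open>1\<close>.
\<close>

section \<open>Matrix algebra and the entrywise \<open>\<ell>\<^sub>1\<close> norm\<close>

definition mat_l1 :: "complex^'n^'m \<Rightarrow> real" where
  "mat_l1 A = (\<Sum>i\<in>UNIV. \<Sum>j\<in>UNIV. cmod (A $ i $ j))"

lemma mat_l1_nonneg: "mat_l1 A \<ge> 0"
  unfolding mat_l1_def by (intro sum_nonneg norm_ge_zero)

lemma norm_entry_le_mat_l1: "cmod (A $ i $ j) \<le> mat_l1 A"
proof -
  have "cmod (A $ i $ j) \<le> (\<Sum>j\<in>UNIV. cmod (A $ i $ j))"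
    by (rule member_le_sum) auto
  also have "\<dots> \<le> mat_l1 A"
    unfolding mat_l1_def by (rule member_le_sum) (auto intro: sum_nonneg)
  finally show ?thesis .
qed

lemma mat_l1_le:
  assumes "\<And>i j. cmod (A $ i $ j) \<le> b"
  shows "mat_l1 (A::complex^'n^'m) \<le> real CARD('m) * real CARD('n) * b"
proof -
  have "mat_l1 A \<le> (\<Sum>i\<in>(UNIV::'m set). \<Sum>j\<in>(UNIV::'n set). b)"
    unfolding mat_l1_def by (intro sum_mono assms)
  then show ?thesis by simp
qed

lemma mat_l1_le_norm: "mat_l1 (A::complex^'n^'m) \<le> real CARD('m) * real CARD('n) * norm A"
  by (rule mat_l1_le) (meson Finite_Cartesian_Product.norm_nth_le order_trans)

lemma mat_l1_add: "mat_l1 (A + B) \<le> mat_l1 A + mat_l1 B"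
  unfolding mat_l1_def by (auto simp: sum.distrib[symmetric] intro!: sum_mono norm_triangle_ineq)

lemma mat_l1_cadj: "mat_l1 (cadj A) = mat_l1 A"
  unfolding mat_l1_def cadj_def by simp (rule sum.swap)

lemma mat_l1_mult: "mat_l1 ((A::complex^'k^'m) ** (B::complex^'n^'k)) \<le> mat_l1 A * mat_l1 B"
proof -
  have "mat_l1 (A ** B) \<le> (\<Sum>i\<in>UNIV. \<Sum>j\<in>UNIV. \<Sum>k\<in>UNIV. cmod (A$i$k) * cmod (B$k$j))"
    unfolding mat_l1_def matrix_matrix_mult_def
    by (auto intro!: sum_mono order.trans[OF norm_sum] simp: norm_mult)
  also have "\<dots> = (\<Sum>i\<in>UNIV. \<Sum>k\<in>UNIV. cmod (A$i$k) * (\<Sum>j\<in>UNIV. cmod (B$k$j)))"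
    by (intro sum.cong refl, subst sum.swap) (simp add: sum_distrib_left)
  also have "\<dots> \<le> (\<Sum>i\<in>UNIV. \<Sum>k\<in>UNIV. cmod (A$i$k) * mat_l1 B)"
  proof (intro sum_mono mult_left_mono)
    fix k show "(\<Sum>j\<in>UNIV. cmod (B$k$j)) \<le> mat_l1 B"
      unfolding mat_l1_def by (rule member_le_sum) (auto intro: sum_nonneg)
  qed auto
  also have "\<dots> = mat_l1 A * mat_l1 B"
    unfolding mat_l1_def by (simp add: sum_distrib_right)
  finally show ?thesis .
qed

lemma cadj_mult: "cadj (A ** B) = cadj B ** cadj A"
  unfolding cadj_def matrix_matrix_mult_def by (simp add: vec_eq_iff mult.commute)

lemma cadj_cadj [simp]: "cadj (cadj A) = A"
  unfolding cadj_def by (simp add: vec_eq_iff)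

lemma cadj_diff: "cadj (A - B) = cadj A - cadj B"
  unfolding cadj_def by (simp add: vec_eq_iff)

lemma matrix_diff_ldistrib: "(A::'a::ring_1^'n^'m) ** (B - C) = A ** B - A ** C"
  by (simp add: matrix_matrix_mult_def vec_eq_iff right_diff_distrib sum_subtractf)

lemma matrix_diff_rdistrib: "((B::'a::ring_1^'n^'m) - C) ** A = B ** A - C ** A"
  by (simp add: matrix_matrix_mult_def vec_eq_iff left_diff_distrib sum_subtractf)

lemma matrix_add_rdistrib: "((B::'a::semiring_1^'n^'m) + C) ** A = B ** A + C ** A"
  by (simp add: matrix_matrix_mult_def vec_eq_iff distrib_right sum.distrib)

lemma matrix_sum_ldistrib: "A ** (\<Sum>x\<in>S. f x) = (\<Sum>x\<in>S. A ** f x)"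
  by (induction S rule: infinite_finite_induct) (simp_all add: matrix_add_ldistrib)

lemma matrix_sum_rdistrib: "(\<Sum>x\<in>S. f x) ** A = (\<Sum>x\<in>S. f x ** A)"
  by (induction S rule: infinite_finite_induct) (simp_all add: matrix_add_rdistrib)

lemma ctrace_sum: "ctrace (\<Sum>x\<in>S. f x) = (\<Sum>x\<in>S. ctrace (f x))"
  unfolding ctrace_def by (simp add: sum_component) (rule sum.swap)

lemma ctrace_mult_comm: "ctrace ((A::complex^'n^'m) ** (B::complex^'m^'n)) = ctrace (B ** A)"
  unfolding ctrace_def matrix_matrix_mult_def
  by simp (subst sum.swap, simp add: mult.commute)

lemma cadj_mult_self_diag: "(cadj A ** A) $ j $ j = of_real (\<Sum>i\<in>UNIV. (cmod (A $ i $ j))^2)"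
proof -
  have "cnj (A $ i $ j) * A $ i $ j = of_real ((cmod (A $ i $ j))^2)" for i
    by (subst complex_norm_square) (rule mult.commute)
  then show ?thesis
    unfolding cadj_def matrix_matrix_mult_def by (simp add: of_real_sum)
qed

section \<open>Positive semidefinite and density matrices\<close>

definition sesq :: "complex^'d^'d \<Rightarrow> complex^'d \<Rightarrow> complex^'d \<Rightarrow> complex" where
  "sesq A x y = (\<Sum>i\<in>UNIV. \<Sum>j\<in>UNIV. cnj (x $ i) * A $ i $ j * y $ j)"

lemma psd_mat_sesq: "psd_mat A \<Longrightarrow> sesq A x x \<in> \<real> \<and> Re (sesq A x x) \<ge> 0"
  unfolding psd_mat_def sesq_def Let_def by blast

lemma sesq_add_left: "sesq A (x + y) z = sesq A x z + sesq A y z"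
  unfolding sesq_def by (simp add: distrib_left distrib_right sum.distrib)

lemma sesq_add_right: "sesq A z (x + y) = sesq A z x + sesq A z y"
  unfolding sesq_def by (simp add: distrib_left distrib_right sum.distrib)

definition unit_vec :: "'d \<Rightarrow> complex \<Rightarrow> complex^'d" where
  "unit_vec i a = (\<chi> k. if k = i then a else 0)"

lemma sesq_unit_vec: "sesq A (unit_vec i a) (unit_vec j b) = cnj a * A $ i $ j * b"
proof -
  have "cnj (unit_vec i a $ p) * A $ p $ q * unit_vec j b $ q
      = (if p = i then if q = j then cnj a * A $ p $ q * b else 0 else 0)" for p q
    by (simp add: unit_vec_def)
  moreover have "(\<Sum>q\<in>UNIV. if p = i then if q = j then cnj a * A $ p $ q * b else 0 else 0)
      = (if p = i then cnj a * A $ i $ j * b else 0)" for p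
    by (auto simp: sum.delta)
  ultimately show ?thesis unfolding sesq_def by (simp add: sum.delta)
qed

lemma sesq_column: "(cadj B ** A ** B) $ n $ n = sesq A (column n B) (column n B)"
  unfolding sesq_def cadj_def matrix_matrix_mult_def column_def
  by (simp add: sum_distrib_right) (subst sum.swap, simp add: mult.assoc)

lemma psd_mat_conj_diag:
  assumes "psd_mat A"
  shows "Re ((cadj B ** A ** B) $ n $ n) \<ge> 0"
  using psd_mat_sesq[OF assms] by (simp add: sesq_column)

lemma density_mat_diag:
  assumes "density_mat \<rho>"
  shows "Im (\<rho> $ i $ i) = 0" and "0 \<le> Re (\<rho> $ i $ i)" and "Re (\<rho> $ i $ i) \<le> 1"
proof -
  have psd: "psd_mat \<rho>" and tr: "ctrace \<rho> = 1" using assms unfolding density_mat_def by auto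
  have diag: "\<rho> $ k $ k \<in> \<real> \<and> Re (\<rho> $ k $ k) \<ge> 0" for k
    using psd_mat_sesq[OF psd, of "unit_vec k 1"] by (simp add: sesq_unit_vec)
  then show "Im (\<rho> $ i $ i) = 0" and "0 \<le> Re (\<rho> $ i $ i)" by (auto simp: complex_is_Real_iff)
  have "Re (\<rho> $ i $ i) \<le> (\<Sum>k\<in>UNIV. Re (\<rho> $ k $ k))"
    by (rule member_le_sum) (use diag in auto)
  also have "\<dots> = 1" using tr unfolding ctrace_def by (metis Re_sum one_complex.simps(1))
  finally show "Re (\<rho> $ i $ i) \<le> 1" .
qed

text \<open>Positivity on \<open>e\<^sub>i + z e\<^sub>j\<close> for \<open>z = \<plusminus>1, \<plusminus>\<i>\<close> bounds the real and imaginary parts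
  of \<open>\<rho>\<^sub>i\<^sub>j\<close> by the diagonal entries.\<close>
lemma density_mat_entry_bound:
  assumes "density_mat \<rho>"
  shows "cmod (\<rho> $ i $ j) \<le> 2"
proof -
  have psd: "psd_mat \<rho>" using assms unfolding density_mat_def by auto
  have "Im (\<rho> $ i $ i + \<rho> $ i $ j * z + cnj z * \<rho> $ j $ i + cnj z * \<rho> $ j $ j * z) = 0 \<and>
      0 \<le> Re (\<rho> $ i $ i + \<rho> $ i $ j * z + cnj z * \<rho> $ j $ i + cnj z * \<rho> $ j $ j * z)" for z
    using psd_mat_sesq[OF psd, of "unit_vec i 1 + unit_vec j z"]
    by (simp add: sesq_add_left sesq_add_right sesq_unit_vec complex_is_Real_iff)
  from this[of 1] this[of "-1"] this[of "\<i>"] this[of "-\<i>"]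
    density_mat_diag[OF assms, of i] density_mat_diag[OF assms, of j]
  have "\<bar>Re (\<rho> $ i $ j)\<bar> \<le> 1" "\<bar>Im (\<rho> $ i $ j)\<bar> \<le> 1"
    by simp_all linarith+
  then show ?thesis using cmod_le[of "\<rho> $ i $ j"] by linarith
qed

lemma mat_l1_density_mat:
  assumes "density_mat (\<rho>::complex^'d^'d)"
  shows "mat_l1 \<rho> \<le> 2 * real CARD('d) * real CARD('d)"
  using mat_l1_le[of \<rho> 2] density_mat_entry_bound[OF assms] by (simp add: mult_ac)

section \<open>Kraus operators and measurement populations\<close>

lemma kraus_column_norm_sum:
  fixes K :: "'m::finite \<Rightarrow> complex^'d^'d"
  assumes "(\<Sum>\<mu>\<in>UNIV. cadj (K \<mu>) ** K \<mu>) = mat 1"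
  shows "(\<Sum>\<mu>\<in>UNIV. \<Sum>i\<in>UNIV. (cmod (K \<mu> $ i $ j))^2) = 1"
proof -
  have "of_real (\<Sum>\<mu>\<in>UNIV. \<Sum>i\<in>UNIV. (cmod (K \<mu> $ i $ j))^2) = (mat 1 :: complex^'d^'d) $ j $ j"
    unfolding assms[symmetric] sum_component by (simp add: cadj_mult_self_diag of_real_sum)
  then show ?thesis
    unfolding mat_def vec_lambda_beta by (metis if_True of_real_eq_1_iff)
qed

lemma kraus_entry_bound:
  fixes K :: "'m::finite \<Rightarrow> complex^'d^'d"
  assumes "(\<Sum>\<mu>\<in>UNIV. cadj (K \<mu>) ** K \<mu>) = mat 1"
  shows "cmod (K \<mu> $ i $ j) \<le> 1"
proof -
  have "(cmod (K \<mu> $ i $ j))^2 \<le> (\<Sum>k\<in>UNIV. (cmod (K \<mu> $ k $ j))^2)"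
    by (rule member_le_sum) auto
  also have "\<dots> \<le> (\<Sum>\<nu>\<in>UNIV. \<Sum>k\<in>UNIV. (cmod (K \<nu> $ k $ j))^2)"
    by (rule member_le_sum) (auto intro: sum_nonneg)
  finally show ?thesis using kraus_column_norm_sum[OF assms] by (simp add: power_le_one_iff)
qed

lemma sum_prob_out:
  fixes M :: "'m::finite \<Rightarrow> real \<Rightarrow> complex^'d::finite^'d"
  assumes "(\<Sum>\<mu>\<in>UNIV. cadj (M \<mu> \<beta>) ** M \<mu> \<beta>) = mat 1"
  shows "(\<Sum>\<mu>\<in>UNIV. prob_out M \<rho> \<beta> \<mu>) = Re (ctrace \<rho>)"
proof -
  have "ctrace (X ** \<rho> ** cadj X) = ctrace (cadj X ** X ** \<rho>)" for X :: "complex^'d^'d"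
    by (metis ctrace_mult_comm matrix_mul_assoc)
  then have "(\<Sum>\<mu>\<in>UNIV. ctrace (M \<mu> \<beta> ** \<rho> ** cadj (M \<mu> \<beta>)))
      = (\<Sum>\<mu>\<in>UNIV. ctrace ((cadj (M \<mu> \<beta>) ** M \<mu> \<beta>) ** \<rho>))"
    by simp
  also have "\<dots> = ctrace \<rho>"
    by (simp add: ctrace_sum[symmetric] matrix_sum_rdistrib[symmetric] assms)
  finally show ?thesis unfolding prob_out_def by (simp flip: Re_sum)
qed

lemma a_coef_nonneg: "psd_mat \<rho> \<Longrightarrow> a_coef U M \<rho> \<beta> \<mu> n \<ge> 0"
  unfolding a_coef_def bdiag_def
  using psd_mat_conj_diag[of \<rho> "cadj (M \<mu> \<beta>) ** U" n]
  by (simp add: cadj_mult matrix_mul_assoc)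

lemma sum_Re_bdiag:
  assumes "unitary_mat U"
  shows "(\<Sum>n\<in>UNIV. Re (bdiag U A n)) = Re (ctrace A)"
proof -
  have "(\<Sum>n\<in>UNIV. Re (bdiag U A n)) = Re (ctrace (cadj U ** (A ** U)))"
    unfolding bdiag_def ctrace_def by (simp add: matrix_mul_assoc flip: Re_sum)
  also have "ctrace (cadj U ** (A ** U)) = ctrace (A ** (U ** cadj U))"
    using ctrace_mult_comm[of "cadj U" "A ** U"] by (simp only: matrix_mul_assoc)
  finally show ?thesis using assms unfolding unitary_mat_def by simp
qed

lemma prob_out_eq_sum_a_coef:
  "unitary_mat U \<Longrightarrow> prob_out M \<rho> \<beta> \<mu> = (\<Sum>n\<in>UNIV. a_coef U M \<rho> \<beta> \<mu> n)"
  unfolding prob_out_def a_coef_def by (simp add: sum_Re_bdiag)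

lemma abs_Re_bdiag_le: "\<bar>Re (bdiag U A n)\<bar> \<le> mat_l1 U * mat_l1 A * mat_l1 U"
proof -
  have "\<bar>Re (bdiag U A n)\<bar> \<le> mat_l1 (cadj U ** A ** U)"
    unfolding bdiag_def by (rule order_trans[OF abs_Re_le_cmod norm_entry_le_mat_l1])
  also have "\<dots> \<le> mat_l1 (cadj U ** A) * mat_l1 U" by (rule mat_l1_mult)
  also have "\<dots> \<le> mat_l1 U * mat_l1 A * mat_l1 U"
    by (intro mult_right_mono mat_l1_nonneg) (metis mat_l1_cadj mat_l1_mult)
  finally show ?thesis .
qed

lemma mat_l1_sandwich: "mat_l1 (X ** \<rho> ** cadj Y) \<le> mat_l1 X * mat_l1 \<rho> * mat_l1 (Y::complex^'d^'d)"
proof -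
  have "mat_l1 (X ** \<rho> ** cadj Y) \<le> mat_l1 (X ** \<rho>) * mat_l1 (cadj Y)" by (rule mat_l1_mult)
  also have "\<dots> \<le> mat_l1 X * mat_l1 \<rho> * mat_l1 Y"
    unfolding mat_l1_cadj by (intro mult_right_mono mat_l1_mult mat_l1_nonneg)
  finally show ?thesis .
qed

lemma Re_bdiag_sandwich_diff:
  fixes X Y \<rho> :: "complex^'d^'d"
  shows "\<bar>Re (bdiag U (X ** \<rho> ** cadj X) n) - Re (bdiag U (Y ** \<rho> ** cadj Y) n)\<bar>
    \<le> mat_l1 U * ((mat_l1 X + mat_l1 Y) * mat_l1 \<rho> * mat_l1 (X - Y)) * mat_l1 U"
proof -
  have split: "X ** \<rho> ** cadj X - Y ** \<rho> ** cadj Y = (X - Y) ** \<rho> ** cadj X + Y ** \<rho> ** cadj (X - Y)"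
    by (simp add: matrix_diff_rdistrib matrix_diff_ldistrib cadj_diff)
  have "mat_l1 (X ** \<rho> ** cadj X - Y ** \<rho> ** cadj Y)
      \<le> mat_l1 ((X - Y) ** \<rho> ** cadj X) + mat_l1 (Y ** \<rho> ** cadj (X - Y))"
    unfolding split by (rule mat_l1_add)
  also have "\<dots> \<le> mat_l1 (X - Y) * mat_l1 \<rho> * mat_l1 X + mat_l1 Y * mat_l1 \<rho> * mat_l1 (X - Y)"
    by (intro add_mono mat_l1_sandwich)
  also have "\<dots> = (mat_l1 X + mat_l1 Y) * mat_l1 \<rho> * mat_l1 (X - Y)"
    by (simp add: algebra_simps)
  finally have bound: "mat_l1 (X ** \<rho> ** cadj X - Y ** \<rho> ** cadj Y)
      \<le> (mat_l1 X + mat_l1 Y) * mat_l1 \<rho> * mat_l1 (X - Y)" .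
  have "bdiag U (X ** \<rho> ** cadj X) n - bdiag U (Y ** \<rho> ** cadj Y) n
      = bdiag U (X ** \<rho> ** cadj X - Y ** \<rho> ** cadj Y) n"
    unfolding bdiag_def by (simp only: matrix_diff_ldistrib matrix_diff_rdistrib vector_minus_component)
  then have "\<bar>Re (bdiag U (X ** \<rho> ** cadj X) n) - Re (bdiag U (Y ** \<rho> ** cadj Y) n)\<bar>
      = \<bar>Re (bdiag U (X ** \<rho> ** cadj X - Y ** \<rho> ** cadj Y) n)\<bar>"
    by (metis minus_complex.sel(1))
  also have "\<dots> \<le> mat_l1 U * mat_l1 (X ** \<rho> ** cadj X - Y ** \<rho> ** cadj Y) * mat_l1 U"
    by (rule abs_Re_bdiag_le)
  also have "\<dots> \<le> mat_l1 U * ((mat_l1 X + mat_l1 Y) * mat_l1 \<rho> * mat_l1 (X - Y)) * mat_l1 U"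
    by (intro mult_left_mono mult_right_mono bound mat_l1_nonneg)
  finally show ?thesis .
qed

section \<open>Nearly proportional populations\<close>

lemma Q1_eq_0_imp_proportional:
  fixes p :: "'m::finite \<Rightarrow> real" and a :: "'m \<Rightarrow> 'd::finite \<Rightarrow> real"
  assumes a_nonneg: "\<And>\<mu> n. a \<mu> n \<ge> 0" and p_eq: "\<And>\<mu>. p \<mu> = (\<Sum>n\<in>UNIV. a \<mu> n)"
    and Q: "(\<Sum>n\<in>UNIV. \<Sum>(\<mu>,\<nu>)\<in>{(\<mu>,\<nu>). p \<mu> * p \<nu> > 0}.
      p \<mu> * p \<nu> / 4 * (a \<mu> n / p \<mu> - a \<nu> n / p \<nu>)^2) = 0"
  shows "a \<mu> n * p \<nu> = a \<nu> n * p \<mu>"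
proof -
  have p_nonneg: "p x \<ge> 0" for x using p_eq[of x] a_nonneg by (simp add: sum_nonneg)
  have a_le_p: "a x k \<le> p x" for x k
    unfolding p_eq[of x] by (rule member_le_sum) (use a_nonneg in auto)
  let ?P = "{(\<mu>,\<nu>). p \<mu> * p \<nu> > 0}"
  let ?t = "\<lambda>n (\<mu>,\<nu>). p \<mu> * p \<nu> / 4 * (a \<mu> n / p \<mu> - a \<nu> n / p \<nu>)^2"
  have t_nonneg: "?t n x \<ge> 0" if "x \<in> ?P" for n x using that by auto
  have "(\<Sum>x\<in>?P. ?t n x) = 0"
    using Q by (subst (asm) sum_nonneg_eq_0_iff) (auto intro: sum_nonneg t_nonneg)
  then have t_zero: "?t n x = 0" if "x \<in> ?P" for x
    using sum_nonneg_eq_0_iff[of ?P "?t n"] t_nonneg that by auto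
  show ?thesis
  proof (cases "p \<mu> * p \<nu> > 0")
    case True
    then have "p \<mu> \<noteq> 0" "p \<nu> \<noteq> 0" by auto
    with True show ?thesis using t_zero[of "(\<mu>,\<nu>)"] by (auto simp: field_simps)
  next
    case False
    then have "p \<mu> = 0 \<or> p \<nu> = 0"
      using p_nonneg[of \<mu>] p_nonneg[of \<nu>] by (auto simp: zero_less_mult_iff)
    then show ?thesis
      using a_le_p a_nonneg by (metis antisym mult_zero_left mult_zero_right)
  qed
qed

lemma abs_mult_diff_le:
  fixes x y x0 y0 :: real
  shows "\<bar>x * y - x0 * y0\<bar> \<le> \<bar>x - x0\<bar> * \<bar>y\<bar> + \<bar>x0\<bar> * \<bar>y - y0\<bar>"
proof -
  have "x * y - x0 * y0 = (x - x0) * y + x0 * (y - y0)" by (simp add: algebra_simps)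
  then show ?thesis by (simp add: abs_mult[symmetric] abs_triangle_ineq)
qed

lemma proportional_perturb:
  fixes a a0 :: "'m::finite \<Rightarrow> 'd::finite \<Rightarrow> real"
  assumes nonneg: "\<And>\<mu> n. a \<mu> n \<ge> 0" "\<And>\<mu> n. a0 \<mu> n \<ge> 0"
    and total: "(\<Sum>\<mu>\<in>UNIV. \<Sum>n\<in>UNIV. a \<mu> n) = 1" "(\<Sum>\<mu>\<in>UNIV. \<Sum>n\<in>UNIV. a0 \<mu> n) = 1"
    and close: "\<And>\<mu> n. \<bar>a \<mu> n - a0 \<mu> n\<bar> \<le> \<delta>"
    and proportional: "\<And>\<mu> \<nu> n. a \<mu> n * (\<Sum>k\<in>UNIV. a \<nu> k) = a \<nu> n * (\<Sum>k\<in>UNIV. a \<mu> k)"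
  shows "\<bar>a0 \<mu> n * (\<Sum>k\<in>UNIV. a0 \<nu> k) - a0 \<nu> n * (\<Sum>k\<in>UNIV. a0 \<mu> k)\<bar> \<le> 4 * real CARD('d) * \<delta>"
proof -
  define p where "p b \<mu> = (\<Sum>k\<in>UNIV. b \<mu> k)" for b :: "'m \<Rightarrow> 'd \<Rightarrow> real" and \<mu>
  have \<delta>: "0 \<le> \<delta>" by (rule order_trans[OF abs_ge_zero close])
  have bounded: "\<bar>p b \<mu>\<bar> \<le> 1 \<and> \<bar>b \<mu> n\<bar> \<le> 1"
    if b: "\<And>\<mu> n. b \<mu> n \<ge> 0" "(\<Sum>\<mu>\<in>UNIV. \<Sum>n\<in>UNIV. b \<mu> n) = 1"
    for b :: "'m \<Rightarrow> 'd \<Rightarrow> real" and \<mu> n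
  proof -
    have "b \<mu> n \<le> p b \<mu>" unfolding p_def by (rule member_le_sum) (use b in auto)
    moreover have "p b \<mu> \<le> 1"
      unfolding p_def b(2)[symmetric] by (rule member_le_sum) (auto intro: sum_nonneg b(1))
    ultimately show ?thesis using b(1)[of \<mu> n] by auto
  qed
  have p_close: "\<bar>p a \<mu> - p a0 \<mu>\<bar> \<le> real CARD('d) * \<delta>" for \<mu>
  proof -
    have "\<bar>p a \<mu> - p a0 \<mu>\<bar> = \<bar>\<Sum>k\<in>UNIV. a \<mu> k - a0 \<mu> k\<bar>"
      unfolding p_def by (simp add: sum_subtractf)
    also have "\<dots> \<le> (\<Sum>k\<in>UNIV. \<bar>a \<mu> k - a0 \<mu> k\<bar>)" by (rule sum_abs)
    also have "\<dots> \<le> (\<Sum>k\<in>(UNIV::'d set). \<delta>)" by (rule sum_mono) (rule close)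
    finally show ?thesis by simp
  qed
  have term_close: "\<bar>a \<mu> n * p a \<nu> - a0 \<mu> n * p a0 \<nu>\<bar> \<le> 2 * real CARD('d) * \<delta>" for \<mu> \<nu> n
  proof -
    have "\<bar>a \<mu> n * p a \<nu> - a0 \<mu> n * p a0 \<nu>\<bar>
        \<le> \<bar>a \<mu> n - a0 \<mu> n\<bar> * \<bar>p a \<nu>\<bar> + \<bar>a0 \<mu> n\<bar> * \<bar>p a \<nu> - p a0 \<nu>\<bar>"
      by (rule abs_mult_diff_le)
    also have "\<dots> \<le> \<delta> * 1 + 1 * (real CARD('d) * \<delta>)"
      using bounded[OF nonneg(1) total(1)] bounded[OF nonneg(2) total(2)] \<delta>
      by (intro add_mono mult_mono close p_close) auto
    also have "\<dots> \<le> 2 * real CARD('d) * \<delta>"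
      using \<delta> mult_right_mono[of 1 "real CARD('d)" \<delta>] by (simp add: Suc_le_eq mult.commute)
    finally show ?thesis .
  qed
  show ?thesis
    using term_close[where \<mu>=\<mu> and \<nu>=\<nu> and n=n] term_close[where \<mu>=\<nu> and \<nu>=\<mu> and n=n]
      proportional[where \<mu>=\<mu> and \<nu>=\<nu> and n=n]
    unfolding p_def by linarith
qed

lemma separated_weights_product_bound:
  fixes q :: "'d::finite \<Rightarrow> real" and w :: "'m::finite \<Rightarrow> 'd \<Rightarrow> real"
  assumes q_nonneg: "\<And>n. q n \<ge> 0" and q_sum: "(\<Sum>n\<in>UNIV. q n) = 1"
    and w_sum: "\<And>n. (\<Sum>\<mu>\<in>UNIV. w \<mu> n) = 1"
    and near: "\<And>\<mu> \<nu> n. \<bar>w \<mu> n * q n * (\<Sum>k\<in>UNIV. w \<nu> k * q k) - w \<nu> n * q n * (\<Sum>k\<in>UNIV. w \<mu> k * q k)\<bar> \<le> E"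
    and sep: "\<gamma> \<le> \<bar>w \<mu> n - w \<mu> n'\<bar>"
  shows "\<gamma> * (q n * q n') \<le> 2 * real CARD('m) * E"
proof -
  define p where "p \<mu> = (\<Sum>k\<in>UNIV. w \<mu> k * q k)" for \<mu>
  have q_le: "q k \<le> 1" for k
    unfolding q_sum[symmetric] by (rule member_le_sum) (use q_nonneg in auto)
  have p_sum: "(\<Sum>\<nu>\<in>UNIV. p \<nu>) = 1"
    unfolding p_def by (subst sum.swap) (simp add: sum_distrib_right[symmetric] w_sum q_sum)
  txt \<open>Sum the near-proportionality over \<open>\<nu>\<close>, using \<open>\<Sum>\<^sub>\<nu> w \<nu> k = 1\<close> and \<open>\<Sum>\<^sub>\<nu> p \<nu> = 1\<close>.\<close>
  have deviation: "\<bar>q k * (w \<mu> k - p \<mu>)\<bar> \<le> real CARD('m) * E" for k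
  proof -
    have "(\<Sum>\<nu>\<in>UNIV. w \<mu> k * q k * p \<nu> - w \<nu> k * q k * p \<mu>)
        = w \<mu> k * q k * (\<Sum>\<nu>\<in>UNIV. p \<nu>) - q k * p \<mu> * (\<Sum>\<nu>\<in>UNIV. w \<nu> k)"
      by (simp add: sum_subtractf sum_distrib_left sum_distrib_right mult_ac)
    also have "\<dots> = q k * (w \<mu> k - p \<mu>)" by (simp add: p_sum w_sum algebra_simps)
    finally have "\<bar>q k * (w \<mu> k - p \<mu>)\<bar> = \<bar>\<Sum>\<nu>\<in>UNIV. w \<mu> k * q k * p \<nu> - w \<nu> k * q k * p \<mu>\<bar>"
      by simp
    also have "\<dots> \<le> (\<Sum>\<nu>\<in>(UNIV::'m set). E)"
      by (rule order_trans[OF sum_abs sum_mono]) (use near p_def in auto)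
    finally show ?thesis by simp
  qed
  have split: "q n * q n' * (w \<mu> n - w \<mu> n')
      = q n' * (q n * (w \<mu> n - p \<mu>)) - q n * (q n' * (w \<mu> n' - p \<mu>))"
    by (simp add: algebra_simps)
  have "q n * q n' * \<bar>w \<mu> n - w \<mu> n'\<bar> = \<bar>q n * q n' * (w \<mu> n - w \<mu> n')\<bar>"
    using q_nonneg[of n] q_nonneg[of n'] by (simp add: abs_mult)
  also have "\<dots> \<le> \<bar>q n' * (q n * (w \<mu> n - p \<mu>))\<bar> + \<bar>q n * (q n' * (w \<mu> n' - p \<mu>))\<bar>"
    unfolding split by (rule abs_triangle_ineq4)
  also have "\<dots> = q n' * \<bar>q n * (w \<mu> n - p \<mu>)\<bar> + q n * \<bar>q n' * (w \<mu> n' - p \<mu>)\<bar>"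
    using q_nonneg[of n] q_nonneg[of n'] by (simp only: abs_mult abs_of_nonneg)
  also have "\<dots> \<le> 1 * (real CARD('m) * E) + 1 * (real CARD('m) * E)"
    by (intro add_mono mult_mono deviation q_le) (use q_nonneg in auto)
  finally have "q n * q n' * \<bar>w \<mu> n - w \<mu> n'\<bar> \<le> 2 * real CARD('m) * E"
    by (simp add: mult_ac)
  moreover have "\<gamma> * (q n * q n') \<le> \<bar>w \<mu> n - w \<mu> n'\<bar> * (q n * q n')"
    using sep q_nonneg by (simp add: mult_right_mono)
  ultimately show ?thesis by (simp add: mult_ac)
qed

text \<open>The largest coordinate of a probability vector is at least \<open>1/d\<close>, so small products of
  distinct coordinates force all the other coordinates to be small.\<close>
lemma prob_vector_concentrates:
  fixes q :: "'d::finite \<Rightarrow> real"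
  assumes q_nonneg: "\<And>n. q n \<ge> 0" and q_sum: "(\<Sum>n\<in>UNIV. q n) = 1" and "\<delta> \<ge> 0"
    and small: "\<And>n n'. n \<noteq> n' \<Longrightarrow> q n * q n' \<le> \<delta>"
  shows "\<exists>N. q N \<ge> 1 - real CARD('d) * real CARD('d) * \<delta>"
proof -
  have "Max (range q) \<in> range q" by (rule Max_in) auto
  then obtain N where "q N = Max (range q)" by (metis rangeE)
  then have N: "q n \<le> q N" for n by simp
  have "1 \<le> real CARD('d) * q N"
    using q_sum sum_mono[of UNIV q "\<lambda>_. q N"] N by simp
  then have other: "q n \<le> real CARD('d) * \<delta>" if "n \<noteq> N" for n
  proof -
    have "q n \<le> q n * (real CARD('d) * q N)"
      using mult_left_mono[OF \<open>1 \<le> _\<close> q_nonneg[of n]] by simp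
    also have "\<dots> = real CARD('d) * (q n * q N)" by (simp add: mult_ac)
    also have "\<dots> \<le> real CARD('d) * \<delta>" by (intro mult_left_mono small that) auto
    finally show ?thesis .
  qed
  have "1 - q N = (\<Sum>n\<in>UNIV - {N}. q n)"
    using q_sum sum.remove[of UNIV N q] by simp
  also have "\<dots> \<le> (\<Sum>n\<in>UNIV - {N}. real CARD('d) * \<delta>)" by (rule sum_mono) (use other in auto)
  also have "\<dots> \<le> real CARD('d) * (real CARD('d) * \<delta>)"
    using card_mono[of UNIV "UNIV - {N}"] \<open>\<delta> \<ge> 0\<close> by (simp add: mult_right_mono)
  finally show ?thesis by (auto simp: algebra_simps)
qed

lemma finite_separation_const:
  fixes w :: "'m::finite \<Rightarrow> 'd::finite \<Rightarrow> real"
  assumes "\<And>n n'. n \<noteq> n' \<Longrightarrow> \<exists>\<mu>. w \<mu> n \<noteq> w \<mu> n'"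
  shows "\<exists>\<gamma>>0. \<forall>n n'. n \<noteq> n' \<longrightarrow> (\<exists>\<mu>. \<gamma> \<le> \<bar>w \<mu> n - w \<mu> n'\<bar>)"
proof -
  define S where "S = (\<lambda>(\<mu>,n,n'). \<bar>w \<mu> n - w \<mu> n'\<bar>) ` {(\<mu>,n,n'). w \<mu> n \<noteq> w \<mu> n'}"
  have "finite S" unfolding S_def by simp
  define \<gamma> where "\<gamma> = (if S = {} then 1 else Min S)"
  have "\<gamma> > 0" unfolding \<gamma>_def using Min_in[OF \<open>finite S\<close>] by (auto simp: S_def)
  moreover have "\<exists>\<mu>. \<gamma> \<le> \<bar>w \<mu> n - w \<mu> n'\<bar>" if distinct: "n \<noteq> n'" for n n'
  proof -
    obtain \<mu> where "w \<mu> n \<noteq> w \<mu> n'" using assms[OF distinct] by blast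
    then have "\<bar>w \<mu> n - w \<mu> n'\<bar> \<in> S" unfolding S_def by (auto intro!: image_eqI[of _ _ "(\<mu>,n,n')"])
    then show ?thesis unfolding \<gamma>_def using Min_le[OF \<open>finite S\<close>] by auto
  qed
  ultimately show ?thesis by blast
qed

section \<open>Perturbation from the diagonal point \<open>\<beta> = 0\<close>\<close>

lemma C2_fun_lipschitz_at_0:
  fixes f :: "real \<Rightarrow> 'a::real_normed_vector"
  assumes "C2_fun f"
  shows "\<exists>L\<ge>0. \<forall>\<beta>. \<bar>\<beta>\<bar> \<le> ut \<longrightarrow> norm (f \<beta> - f 0) \<le> L * \<bar>\<beta>\<bar>"
proof -
  obtain f' f'' where f': "\<And>u. (f has_vector_derivative f' u) (at u)"
    and f'': "\<And>u. (f' has_vector_derivative f'' u) (at u)"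
    using assms unfolding C2_fun_def by blast
  have "continuous_on {-ut..ut} f'"
    using f'' by (meson continuous_at_imp_continuous_on has_vector_derivative_continuous)
  then have "bounded (f' ` {-ut..ut})"
    by (intro compact_imp_bounded compact_continuous_image) auto
  then obtain B where B: "B > 0" "\<And>x. x \<in> {-ut..ut} \<Longrightarrow> norm (f' x) \<le> B"
    by (auto simp: bounded_pos)
  have "norm (f \<beta> - f 0) \<le> B * \<bar>\<beta>\<bar>" if "\<bar>\<beta>\<bar> \<le> ut" for \<beta>
  proof -
    have "norm (f \<beta> - f 0) \<le> B * norm (\<beta> - 0)"
    proof (rule differentiable_bound[where S="{-ut..ut}" and f' = "\<lambda>x h. h *\<^sub>R f' x"])
      show "(f has_derivative (\<lambda>h. h *\<^sub>R f' x)) (at x within {-ut..ut})" for x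
        using f'[of x] has_derivative_at_withinI unfolding has_vector_derivative_def by blast
      show "onorm (\<lambda>h. h *\<^sub>R f' x) \<le> B" if "x \<in> {-ut..ut}" for x
        using B(2)[OF that] onorm_scaleR_left[OF bounded_linear_ident, of "f' x"]
        by (simp add: onorm_id)
    qed (use that in auto)
    then show ?thesis by simp
  qed
  then show ?thesis using B(1) by (intro exI[of _ B]) auto
qed

lemma C2_family_mat_l1_lipschitz_at_0:
  fixes M :: "'m::finite \<Rightarrow> real \<Rightarrow> complex^'n^'k"
  assumes "\<And>\<mu>. C2_fun (M \<mu>)"
  shows "\<exists>L\<ge>0. \<forall>\<mu> \<beta>. \<bar>\<beta>\<bar> \<le> ut \<longrightarrow> mat_l1 (M \<mu> \<beta> - M \<mu> 0) \<le> L * \<bar>\<beta>\<bar>"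
proof -
  have "\<forall>\<mu>. \<exists>L\<ge>0. \<forall>\<beta>. \<bar>\<beta>\<bar> \<le> ut \<longrightarrow> norm (M \<mu> \<beta> - M \<mu> 0) \<le> L * \<bar>\<beta>\<bar>"
    using C2_fun_lipschitz_at_0[OF assms] by blast
  then obtain Lf where Lf: "\<And>\<mu>. Lf \<mu> \<ge> 0"
    "\<And>\<mu> \<beta>. \<bar>\<beta>\<bar> \<le> ut \<Longrightarrow> norm (M \<mu> \<beta> - M \<mu> 0) \<le> Lf \<mu> * \<bar>\<beta>\<bar>"
    by metis
  define L where "L = real CARD('k) * real CARD('n) * (\<Sum>\<mu>\<in>UNIV. Lf \<mu>)"
  have "mat_l1 (M \<mu> \<beta> - M \<mu> 0) \<le> L * \<bar>\<beta>\<bar>" if "\<bar>\<beta>\<bar> \<le> ut" for \<mu> \<beta>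
  proof -
    have "mat_l1 (M \<mu> \<beta> - M \<mu> 0) \<le> real CARD('k) * real CARD('n) * norm (M \<mu> \<beta> - M \<mu> 0)"
      by (rule mat_l1_le_norm)
    also have "\<dots> \<le> real CARD('k) * real CARD('n) * (Lf \<mu> * \<bar>\<beta>\<bar>)"
      by (intro mult_left_mono Lf(2) that) auto
    also have "\<dots> \<le> real CARD('k) * real CARD('n) * ((\<Sum>\<mu>\<in>UNIV. Lf \<mu>) * \<bar>\<beta>\<bar>)"
      by (intro mult_left_mono mult_right_mono member_le_sum) (use Lf(1) in auto)
    finally show ?thesis unfolding L_def by (simp add: mult_ac)
  qed
  moreover have "L \<ge> 0" unfolding L_def using Lf(1) by (simp add: sum_nonneg)
  ultimately show ?thesis by blast
qed

lemma diag_mat_sandwich_diag: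
  "(diag_mat c ** R ** cadj (diag_mat c)) $ n $ n = c n * R $ n $ n * cnj (c n)"
proof -
  have row: "(diag_mat c ** R) $ n $ k = c n * R $ n $ k" for k
  proof -
    have "(diag_mat c ** R) $ n $ k = (\<Sum>j\<in>UNIV. if j = n then c n * R $ j $ k else 0)"
      unfolding diag_mat_def matrix_matrix_mult_def by (simp only: vec_lambda_beta) (intro sum.cong, auto)
    then show ?thesis by (simp add: sum.delta)
  qed
  have "(diag_mat c ** R ** cadj (diag_mat c)) $ n $ n
      = (\<Sum>k\<in>UNIV. if k = n then (diag_mat c ** R) $ n $ k * cnj (c n) else 0)"
    unfolding matrix_matrix_mult_def[of "diag_mat c ** R"] vec_lambda_beta
    by (intro sum.cong) (auto simp: cadj_def diag_mat_def)
  then show ?thesis by (simp add: sum.delta row)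
qed

lemma unitary_mat_cancel_left: "unitary_mat U \<Longrightarrow> cadj U ** (U ** X) = X"
  unfolding unitary_mat_def by (simp only: matrix_mul_assoc matrix_mul_lid)

lemma unitary_conj_sandwich:
  assumes "unitary_mat U"
  shows "cadj U ** ((U ** D ** cadj U) ** \<rho> ** cadj (U ** D ** cadj U)) ** U
    = D ** (cadj U ** \<rho> ** U) ** cadj D"
  using assms unfolding unitary_mat_def
  by (simp only: cadj_mult cadj_cadj matrix_mul_assoc[symmetric] unitary_mat_cancel_left[OF assms]
      matrix_mul_rid)

lemma a_coef_at_diag:
  assumes "unitary_mat U" and "M \<mu> 0 = U ** diag_mat c ** cadj U"
  shows "a_coef U M \<rho> 0 \<mu> n = (cmod (c n))^2 * Re (bdiag U \<rho> n)"
proof -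
  have "bdiag U (M \<mu> 0 ** \<rho> ** cadj (M \<mu> 0)) n = (c n * cnj (c n)) * bdiag U \<rho> n"
    unfolding bdiag_def assms(2) unitary_conj_sandwich[OF assms(1)]
    by (simp add: diag_mat_sandwich_diag mult_ac)
  then show ?thesis unfolding a_coef_def complex_norm_square[symmetric] by simp
qed

lemma diag_kraus_weights_sum:
  fixes c :: "'m::finite \<Rightarrow> 'd::finite \<Rightarrow> complex"
  assumes U: "unitary_mat U"
    and kraus: "(\<Sum>\<mu>\<in>UNIV. cadj (U ** diag_mat (c \<mu>) ** cadj U) ** (U ** diag_mat (c \<mu>) ** cadj U)) = mat 1"
  shows "(\<Sum>\<mu>\<in>UNIV. (cmod (c \<mu> n))^2) = 1"
proof -
  have "(\<Sum>\<mu>\<in>UNIV. cadj (diag_mat (c \<mu>)) ** diag_mat (c \<mu>))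
      = cadj U ** (\<Sum>\<mu>\<in>UNIV. cadj (U ** diag_mat (c \<mu>) ** cadj U) ** (U ** diag_mat (c \<mu>) ** cadj U)) ** U"
    using U unfolding unitary_mat_def
    by (simp only: matrix_sum_ldistrib matrix_sum_rdistrib cadj_mult cadj_cadj
        matrix_mul_assoc[symmetric] unitary_mat_cancel_left[OF U] matrix_mul_rid)
  also have "\<dots> = mat 1" using U unfolding unitary_mat_def by (simp add: kraus)
  finally have "(\<Sum>\<mu>\<in>UNIV. \<Sum>i\<in>UNIV. (cmod (diag_mat (c \<mu>) $ i $ n))^2) = 1"
    by (rule kraus_column_norm_sum)
  moreover have "(cmod (diag_mat (c \<mu>) $ i $ n))^2 = (if i = n then (cmod (c \<mu> n))^2 else 0)" for \<mu> i
    by (simp add: diag_mat_def)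
  ultimately show ?thesis by simp
qed

lemma sum_a_coef:
  fixes M :: "'m::finite \<Rightarrow> real \<Rightarrow> complex^'d::finite^'d"
  assumes "unitary_mat U" and "(\<Sum>\<mu>\<in>UNIV. cadj (M \<mu> \<beta>) ** M \<mu> \<beta>) = mat 1" and "density_mat \<rho>"
  shows "(\<Sum>\<mu>\<in>UNIV. \<Sum>n\<in>UNIV. a_coef U M \<rho> \<beta> \<mu> n) = 1"
  using sum_prob_out[where M=M and \<beta>=\<beta> and \<rho>=\<rho>, OF assms(2)] assms(3)
  by (simp add: prob_out_eq_sum_a_coef[OF assms(1)] density_mat_def)

lemma a_coef_lipschitz:
  fixes M :: "'m::finite \<Rightarrow> real \<Rightarrow> complex^'d::finite^'d"
  assumes kraus: "\<And>u. (\<Sum>\<mu>\<in>UNIV. cadj (M \<mu> u) ** M \<mu> u) = mat 1"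
    and lip: "mat_l1 (M \<mu> \<beta> - M \<mu> 0) \<le> L * \<bar>\<beta>\<bar>" and "density_mat \<rho>"
  shows "\<bar>a_coef U M \<rho> \<beta> \<mu> n - a_coef U M \<rho> 0 \<mu> n\<bar>
    \<le> 4 * real CARD('d) ^ 4 * (mat_l1 U)^2 * L * \<bar>\<beta>\<bar>"
proof -
  define d where "d = real CARD('d)"
  have l1_M: "mat_l1 (M \<mu> u) \<le> d * d" for u
    using mat_l1_le[of "M \<mu> u" 1] kraus_entry_bound[OF kraus] unfolding d_def by simp
  have l1_\<rho>: "mat_l1 \<rho> \<le> 2 * d * d" unfolding d_def by (rule mat_l1_density_mat[OF assms(3)])
  have "(mat_l1 (M \<mu> \<beta>) + mat_l1 (M \<mu> 0)) * mat_l1 \<rho> * mat_l1 (M \<mu> \<beta> - M \<mu> 0)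
      \<le> (d * d + d * d) * (2 * d * d) * (L * \<bar>\<beta>\<bar>)"
    by (intro mult_mono add_mono l1_M l1_\<rho> lip mat_l1_nonneg add_nonneg_nonneg mult_nonneg_nonneg)
      (auto simp: d_def)
  then have "mat_l1 U * ((mat_l1 (M \<mu> \<beta>) + mat_l1 (M \<mu> 0)) * mat_l1 \<rho> * mat_l1 (M \<mu> \<beta> - M \<mu> 0)) * mat_l1 U
      \<le> mat_l1 U * ((d * d + d * d) * (2 * d * d) * (L * \<bar>\<beta>\<bar>)) * mat_l1 U"
    by (intro mult_left_mono mult_right_mono mat_l1_nonneg)
  also have "\<dots> = 4 * d ^ 4 * (mat_l1 U)^2 * L * \<bar>\<beta>\<bar>"
    by (simp add: power2_eq_square power4_eq_xxxx algebra_simps)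
  finally show ?thesis
    using Re_bdiag_sandwich_diff[where X="M \<mu> \<beta>" and Y="M \<mu> 0" and \<rho>=\<rho> and U=U and n=n]
    unfolding a_coef_def d_def by linarith
qed

lemma Q1_eq_0_concentration:
  fixes M :: "'m::finite \<Rightarrow> real \<Rightarrow> complex^'d::finite^'d"
    and c :: "'m \<Rightarrow> 'd \<Rightarrow> complex"
  assumes U: "unitary_mat U"
    and kraus: "\<And>u. (\<Sum>\<mu>\<in>UNIV. cadj (M \<mu> u) ** M \<mu> u) = mat 1"
    and diag: "\<And>\<mu>. M \<mu> 0 = U ** diag_mat (c \<mu>) ** cadj U"
    and lip: "\<And>\<mu>. mat_l1 (M \<mu> \<beta> - M \<mu> 0) \<le> L * \<bar>\<beta>\<bar>"
    and sep: "\<And>n n'. n \<noteq> n' \<Longrightarrow> \<exists>\<mu>. \<gamma> \<le> \<bar>(cmod (c \<mu> n))^2 - (cmod (c \<mu> n'))^2\<bar>"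
    and \<gamma>: "\<gamma> > 0"
    and \<rho>: "density_mat \<rho>" and Q: "Q1 U M \<rho> \<beta> = 0"
  shows "\<exists>n. Re (bdiag U \<rho> n)
    \<ge> 1 - 32 * real CARD('m) * real CARD('d) ^ 7 * (mat_l1 U)^2 * L / \<gamma> * \<bar>\<beta>\<bar>"
proof -
  define d where "d = real CARD('d)"
  define q where "q n = Re (bdiag U \<rho> n)" for n
  define w where "w \<mu> n = (cmod (c \<mu> n))^2" for \<mu> n
  define E where "E = 4 * d * (4 * d ^ 4 * (mat_l1 U)^2 * L * \<bar>\<beta>\<bar>)"
  have psd: "psd_mat \<rho>" and tr: "ctrace \<rho> = 1" using \<rho> unfolding density_mat_def by auto
  have q_nonneg: "q n \<ge> 0" for n
    unfolding q_def bdiag_def using psd_mat_conj_diag[OF psd] by simp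
  have q_sum: "(\<Sum>n\<in>UNIV. q n) = 1" unfolding q_def using sum_Re_bdiag[OF U, of \<rho>] tr by simp
  have w_sum: "(\<Sum>\<mu>\<in>UNIV. w \<mu> n) = 1" for n
    unfolding w_def by (rule diag_kraus_weights_sum[OF U]) (use kraus[of 0] in \<open>simp only: diag\<close>)
  have a_0: "a_coef U M \<rho> 0 \<mu> n = w \<mu> n * q n" for \<mu> n
    unfolding w_def q_def by (rule a_coef_at_diag[where M=M and \<mu>=\<mu>, OF U diag])
  have proportional: "a_coef U M \<rho> \<beta> \<mu> n * (\<Sum>k\<in>UNIV. a_coef U M \<rho> \<beta> \<nu> k)
      = a_coef U M \<rho> \<beta> \<nu> n * (\<Sum>k\<in>UNIV. a_coef U M \<rho> \<beta> \<mu> k)" for \<mu> \<nu> n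
    using Q1_eq_0_imp_proportional[where a="a_coef U M \<rho> \<beta>" and p="prob_out M \<rho> \<beta>",
        OF a_coef_nonneg[OF psd] prob_out_eq_sum_a_coef[OF U] Q[unfolded Q1_def]]
    unfolding prob_out_eq_sum_a_coef[OF U] .
  have near: "\<bar>w \<mu> n * q n * (\<Sum>k\<in>UNIV. w \<nu> k * q k) - w \<nu> n * q n * (\<Sum>k\<in>UNIV. w \<mu> k * q k)\<bar> \<le> E"
    for \<mu> \<nu> n
    using proportional_perturb[where a="a_coef U M \<rho> \<beta>" and a0="a_coef U M \<rho> 0",
        OF a_coef_nonneg[OF psd] a_coef_nonneg[OF psd] sum_a_coef[where M=M, OF U kraus \<rho>]
        sum_a_coef[where M=M, OF U kraus \<rho>] a_coef_lipschitz[where M=M, OF kraus lip \<rho>] proportional]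
    unfolding E_def d_def a_0 by (simp add: mult_ac)
  have E: "E \<ge> 0" by (rule order_trans[OF abs_ge_zero near])
  have small: "q n * q n' \<le> 2 * real CARD('m) * E / \<gamma>" if distinct: "n \<noteq> n'" for n n'
  proof -
    obtain \<mu> where "\<gamma> \<le> \<bar>w \<mu> n - w \<mu> n'\<bar>" using sep[OF distinct] unfolding w_def by blast
    from separated_weights_product_bound[OF q_nonneg q_sum w_sum near this]
    show ?thesis using \<gamma> by (simp add: field_simps)
  qed
  have "0 \<le> 2 * real CARD('m) * E / \<gamma>" using E \<gamma> by simp
  then obtain N where N: "q N \<ge> 1 - d * d * (2 * real CARD('m) * E / \<gamma>)"
    using prob_vector_concentrates[OF q_nonneg q_sum _ small] unfolding d_def by blast
  moreover have "d * d * (2 * real CARD('m) * E / \<gamma>)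
      = 32 * real CARD('m) * d ^ 7 * (mat_l1 U)^2 * L / \<gamma> * \<bar>\<beta>\<bar>"
    unfolding E_def by (simp add: field_simps eval_nat_numeral)
  ultimately show ?thesis unfolding q_def d_def by (intro exI[of _ N]) linarith
qed

theorem lemma3:
  fixes M :: "'m::finite \<Rightarrow> real \<Rightarrow> complex^'d::finite^'d"
    and U :: "complex^'d^'d"
    and c :: "'m \<Rightarrow> 'd \<Rightarrow> complex"
    and ut :: real
  assumes U: "unitary_mat U"
    and kraus: "\<And>u. (\<Sum>\<mu>\<in>UNIV. cadj (M \<mu> u) ** M \<mu> u) = mat 1"
    and A1: "\<And>\<mu>. M \<mu> 0 = U ** diag_mat (c \<mu>) ** cadj U"
    and A2: "\<And>n1 n2. n1 \<noteq> n2 \<Longrightarrow> \<exists>\<mu>. (cmod (c \<mu> n1))^2 \<noteq> (cmod (c \<mu> n2))^2"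
    and A3: "\<And>\<mu>. C2_fun (M \<mu>)"
    and ut: "ut > 0"
  shows "\<exists>C>0. \<forall>\<rho> \<beta>. density_mat \<rho> \<and> \<bar>\<beta>\<bar> \<le> ut \<and> Q1 U M \<rho> \<beta> = 0 \<longrightarrow>
           (\<exists>n. Re (bdiag U \<rho> n) \<ge> 1 - C * \<bar>\<beta>\<bar>)"
proof -
  obtain L where "L \<ge> 0" and lip: "\<And>\<mu> \<beta>. \<bar>\<beta>\<bar> \<le> ut \<Longrightarrow> mat_l1 (M \<mu> \<beta> - M \<mu> 0) \<le> L * \<bar>\<beta>\<bar>"
    using C2_family_mat_l1_lipschitz_at_0[of M ut] A3 by blast
  obtain \<gamma> where "\<gamma> > 0" and sep: "\<And>n n'. n \<noteq> n' \<Longrightarrow> \<exists>\<mu>. \<gamma> \<le> \<bar>(cmod (c \<mu> n))^2 - (cmod (c \<mu> n'))^2\<bar>"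
    using finite_separation_const[of "\<lambda>\<mu> n. (cmod (c \<mu> n))^2", OF A2] by blast
  define K where "K = 32 * real CARD('m) * real CARD('d) ^ 7 * (mat_l1 U)^2 * L / \<gamma>"
  have "K \<ge> 0" unfolding K_def using \<open>L \<ge> 0\<close> \<open>\<gamma> > 0\<close> by simp
  show ?thesis
  proof (intro exI[of _ "K + 1"] conjI allI impI)
    fix \<rho> \<beta> assume "density_mat \<rho> \<and> \<bar>\<beta>\<bar> \<le> ut \<and> Q1 U M \<rho> \<beta> = 0"
    then obtain n where "Re (bdiag U \<rho> n) \<ge> 1 - K * \<bar>\<beta>\<bar>"
      using Q1_eq_0_concentration[where M=M and c=c, OF U kraus A1 _ sep \<open>\<gamma> > 0\<close>] lip
      unfolding K_def by blast
    then show "\<exists>n. Re (bdiag U \<rho> n) \<ge> 1 - (K + 1) * \<bar>\<beta>\<bar>"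
      by (intro exI[of _ n]) (simp add: algebra_simps)
  qed (use \<open>K \<ge> 0\<close> in simp)
qed

end
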